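(* Let $r\in\mathbb{N}$ (so $n=r\ge 1$), let $0<\alpha\le 1$ and let $0<\bar c<\bar c^{\ast}$. Then the capacity-achieving input distribution is $$p_X^{\ast}=\sum_{j=1}^{n+1} m_j\,\delta_{x_j},\qquad x_j=\frac{j-1}{n},\qquad m_j=\frac{e^{-\lambda^{\ast}c_j}}{z},\quad z=\sum_{j=1}^{n+1}e^{-\lambda^{\ast}c_j},\quad c_j=x_j^{\alpha},$$ for some $\lambda^{\ast}>0$ (namely the $\lambda^\ast$ for which $\sum_j m_j c_j=\bar c$). In particular $p_X^{\ast}$ is discrete with support $S_0=\{x_1,\dots,x_{n+1}\}$.
   Context: Fix $b>0$ and set $r:=1/(2b)$, $n:=\lfloor r\rfloor$. Consider the additive uniform noise channel $Y=X+N$ with $N\sim\mathrm{Uniform}(-b,b)$ independent of $X$, so the transition density is $p_N(y\mid x)=r\,\mathbf{1}_{x-b<y<x+b}$. Admissible inputs are probability distributions $p_X$ on $[0,1]$ (peak amplitude constraint). For such $p_X$ the output density is $p_Y(y;p_X)=\int p_N(y\mid x)\,dp_X(x)$, the marginal information density is $i(x;p_X)=\int p_N(y\mid x)\log\frac{p_N(y\mid x)}{p_Y(y;p_X)}\,dy\in[0,\infty]$, and $I(p_X)=\int i(x;p_X)\,dp_X(x)$ is the mutual information between $X$ and $Y$. The cost function is $c(x)=x^{\alpha}$ with $\alpha>0$. For $\bar c>0$, the capacity-achieving input distribution $p_X^{\ast}$ is the (unique) maximizer of $I(p_X)$ over probability distributions $p_X$ on $[0,1]$ with $\mathbb{E}_{p_X}[c(X)]\le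 \bar c$. Standard points and masses: let $N_r=n+1$ if $r\in\mathbb{N}$ and $N_r=2n+2$ if $r\notin\mathbb{N}$. For $j=1,\dots,N_r$ set $x_j=(j-1)/n$ if $r\in\mathbb{N}$; if $r\notin\mathbb{N}$, set $x_j=(j-1)/(2r)$ for odd $j$ and $x_j=1-(2n+2-j)/(2r)$ for even $j$. Let $S_0=\{x_1,\dots,x_{N_r}\}$. Define the unconstrained masses $m^0_j=1/(n+1)$ if $r\in\mathbb{N}$; if $r\notin\mathbb{N}$, $m^0_j=\frac{2n+2-(j-1)}{2(n+1)(n+2)}$ for odd $j$ and $m^0_j=\frac{j}{2(n+1)(n+2)}$ for even $j$. The distribution $\sum_j m^0_j\delta_{x_j}$ is the capacity-achieving input distribution without cost constraint, and the critical cost is $\bar c^{\ast}:=\sum_{j=1}^{N_r} m^0_j\,x_j^{\alpha}$ (the cost constraint is active iff $\bar c<\bar c^\ast$). *)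

theory Defs
  imports "HOL-Probability.Probability"
begin

text \<open>Uniform noise channel Y = X + N, N ~ Uniform(-b,b); r = 1/(2b).
  Logarithms are natural (the maximizer does not depend on the base).\<close>

definition unif_r :: "real \<Rightarrow> real" where
  "unif_r b = 1 / (2 * b)"

definition std_n :: "real \<Rightarrow> nat" where
  "std_n b = nat \<lfloor>unif_r b\<rfloor>"

definition pN :: "real \<Rightarrow> real \<Rightarrow> real \<Rightarrow> real" where
  "pN b y x = unif_r b * indicator {x - b<..<x + b} y"

text \<open>output density p_Y(y) = \<integral> p_N(y|x) dp_X(x) = r * P_X((y-b,y+b))\<close>
definition pY :: "real \<Rightarrow> real measure \<Rightarrow> real \<Rightarrow> real" where
  "pY b M y = unif_r b * measure M {y - b<..<y + b}"

text \<open>marginal information density i(x;p_X) \<in> [0,\<infinity>]; integrand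
  p_N(y|x) log(p_N(y|x)/p_Y(y)) is nonnegative (p_Y \<le> r) and equals +\<infinity> where p_Y(y) = 0
  inside the window, 0 outside the window (convention 0 log 0 = 0).\<close>
definition info_dens :: "real \<Rightarrow> real measure \<Rightarrow> real \<Rightarrow> ennreal" where
  "info_dens b M x =
     (\<integral>\<^sup>+ y. (if x - b < y \<and> y < x + b then
                 (if pY b M y = 0 then \<infinity>
                  else ennreal (pN b y x * ln (pN b y x / pY b M y)))
               else 0) \<partial>lborel)"

definition mutual_info :: "real \<Rightarrow> real measure \<Rightarrow> ennreal" where
  "mutual_info b M = (\<integral>\<^sup>+ x. info_dens b M x \<partial>M)"

definition admissible_input :: "real measure \<Rightarrow> bool" where
  "admissible_input M \<longleftrightarrow> prob_space M \<and> sets M = sets borel \<and> emeasure M {0..1} = 1"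

definition cost_ok :: "real \<Rightarrow> real \<Rightarrow> real measure \<Rightarrow> bool" where
  "cost_ok \<alpha> cbar M \<longleftrightarrow> (\<integral>\<^sup>+ x. ennreal (x powr \<alpha>) \<partial>M) \<le> ennreal cbar"

definition capacity_achieving :: "real \<Rightarrow> real \<Rightarrow> real \<Rightarrow> real measure \<Rightarrow> bool" where
  "capacity_achieving b \<alpha> cbar M \<longleftrightarrow>
     admissible_input M \<and> cost_ok \<alpha> cbar M \<and>
     (\<forall>M'. admissible_input M' \<and> cost_ok \<alpha> cbar M' \<longrightarrow> mutual_info b M' \<le> mutual_info b M)"

definition point_masses :: "nat set \<Rightarrow> (nat \<Rightarrow> real) \<Rightarrow> (nat \<Rightarrow> real) \<Rightarrow> real measure" where
  "point_masses J xs ms =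
     measure_of UNIV (sets borel) (\<lambda>A. ennreal (\<Sum>j\<in>J. ms j * indicator A (xs j)))"

definition crit_cost_nat :: "real \<Rightarrow> real \<Rightarrow> real" where
  "crit_cost_nat b \<alpha> =
     (let n = std_n b in \<Sum>j\<in>{1..n+1}. (1 / real (n + 1)) * (real (j - 1) / real n) powr \<alpha>)"

end

theory Submission
  imports Defs
begin

text \<open>
  For r = n the windows (y - b, y + b) of length 1/n centred at the grid points x_j = (j-1)/n
  tile the line, so an input on the grid with masses m_j has the step output density n m_j on
  the j-th cell. For an arbitrary admissible input M put g(y) = M((y - b, y + b)); then
  I(M) = \<integral> n g ln(1/g), and Gibbs' inequality against the step density gives
  I(M) \<le> \<integral> n g(y) ln(1/m_{j(y)}) dy, with equality iff n g is that step density.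
  By Fubini the right-hand side is E_M[\<phi>(X)], where \<phi> interpolates the values
  ln(1/m_j) linearly between the grid points. For the Gibbs masses ln(1/m_j) = \<lambda> c_j + ln z,
  and concavity of x powr \<alpha> for \<alpha> \<le> 1 gives \<phi>(x) \<le> \<lambda> x powr \<alpha> + ln z, so every input
  of cost at most cbar has I(M) \<le> \<lambda> cbar + ln z, which the Gibbs input attains. Equality
  forces g to be the step function, and this determines the distribution function of M at every
  point off the grid, hence M itself.
\<close>

lemma concave_on_powr:
  fixes \<alpha> :: real assumes "0 < \<alpha>" "\<alpha> \<le> 1"
  shows "concave_on {0<..} (\<lambda>x. x powr \<alpha>)"
proof (rule f''_le0_imp_concave[where f'="\<lambda>x. \<alpha> * x powr (\<alpha> - 1)"
      and f''="\<lambda>x. \<alpha> * ((\<alpha> - 1) * x powr (\<alpha> - 1 - 1))"])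
  fix x :: real assume x: "x \<in> {0<..}"
  show "((\<lambda>x. x powr \<alpha>) has_real_derivative \<alpha> * x powr (\<alpha> - 1)) (at x)"
    using x by (auto intro!: derivative_eq_intros)
  show "((\<lambda>x. \<alpha> * x powr (\<alpha> - 1)) has_real_derivative \<alpha> * ((\<alpha> - 1) * x powr (\<alpha> - 1 - 1))) (at x)"
    using x by (auto intro!: derivative_eq_intros)
  show "\<alpha> * ((\<alpha> - 1) * x powr (\<alpha> - 1 - 1)) \<le> 0"
    using assms x by (intro mult_nonneg_nonpos mult_nonpos_nonneg) auto
qed simp

lemma powr_convex_combination_ge:
  fixes \<alpha> a b t :: real
  assumes "0 < \<alpha>" "\<alpha> \<le> 1" "0 \<le> a" "0 \<le> b" "0 \<le> t" "t \<le> 1"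
  shows "(1 - t) * a powr \<alpha> + t * b powr \<alpha> \<le> ((1 - t) * a + t * b) powr \<alpha>"
proof -
  have t_le: "t \<le> t powr \<alpha>" and one_minus_t_le: "1 - t \<le> (1 - t) powr \<alpha>"
    using powr_mono'[of \<alpha> 1 t] powr_mono'[of \<alpha> 1 "1 - t"] assms by simp_all
  consider "a = 0" | "b = 0" | "a > 0" "b > 0" using assms by linarith
  then show ?thesis
  proof cases
    case 1
    have "t * b powr \<alpha> \<le> t powr \<alpha> * b powr \<alpha>"
      by (rule mult_right_mono[OF t_le]) simp
    also have "\<dots> = (t * b) powr \<alpha>" using assms by (simp add: powr_mult)
    finally show ?thesis using 1 assms by simp
  next
    case 2
    have "(1 - t) * a powr \<alpha> \<le> (1 - t) powr \<alpha> * a powr \<alpha>"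
      by (rule mult_right_mono[OF one_minus_t_le]) simp
    also have "\<dots> = ((1 - t) * a) powr \<alpha>" using assms by (simp add: powr_mult)
    finally show ?thesis using 2 assms by simp
  next
    case 3
    with concave_onD[OF concave_on_powr[OF assms(1,2)], of t a b] assms show ?thesis by simp
  qed
qed

definition hat :: "nat \<Rightarrow> nat \<Rightarrow> real \<Rightarrow> real" where
  "hat n j x = max 0 (1 - \<bar>real n * x - real (j - 1)\<bar>)"

lemma hat_nonneg: "0 \<le> hat n j x"
  by (simp add: hat_def)

lemma sum_hat_interpolation:
  fixes n :: nat and f :: "nat \<Rightarrow> real" and x :: real
  assumes n: "n \<ge> 1" and x: "0 \<le> x" "x \<le> 1"
  obtains k t where "k \<in> {1..n}" "0 \<le> t" "t \<le> 1" "real n * x = real (k - 1) + t"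
    "(\<Sum>j\<in>{1..n+1}. f j * hat n j x) = (1 - t) * f k + t * f (k + 1)"
proof -
  define u where "u = real n * x"
  have u0: "0 \<le> u" and un: "u \<le> real n" using x n by (auto simp: u_def mult_le_cancel_left1)
  define k where "k = min n (nat \<lfloor>u\<rfloor> + 1)"
  have k: "k \<in> {1..n}" using n by (auto simp: k_def)
  have k_le: "real (k - 1) \<le> u"
    using u0 un k by (auto simp: k_def min_def of_nat_diff) linarith+
  have k_ge: "u \<le> real k"
    using u0 un k by (auto simp: k_def min_def) linarith
  define t where "t = u - real (k - 1)"
  have t: "0 \<le> t" "t \<le> 1" using k_le k_ge k by (auto simp: t_def of_nat_diff)
  have hat_far: "hat n j x = 0" if "j \<in> {1..n+1}" "j \<noteq> k" "j \<noteq> k + 1" for j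
  proof -
    have "j < k \<or> j > k + 1" using that by auto
    then have "\<bar>u - real (j - 1)\<bar> \<ge> 1"
    proof
      assume "j < k"
      then have "real (j - 1) + 1 \<le> real (k - 1)" using that by (auto simp: of_nat_diff)
      then show ?thesis using k_le by linarith
    next
      assume "j > k + 1"
      then have "real (j - 1) \<ge> real k + 1" using that by (auto simp: of_nat_diff)
      then show ?thesis using k_ge by linarith
    qed
    then show ?thesis by (simp add: hat_def u_def[symmetric])
  qed
  have "(\<Sum>j\<in>{1..n+1}. f j * hat n j x) = (\<Sum>j\<in>{k, k + 1}. f j * hat n j x)"
    by (rule sum.mono_neutral_right) (use k hat_far in auto)
  also have "\<dots> = (1 - t) * f k + t * f (k + 1)"
    using t k by (simp add: hat_def u_def[symmetric] t_def of_nat_diff)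
  finally have "(\<Sum>j\<in>{1..n+1}. f j * hat n j x) = (1 - t) * f k + t * f (k + 1)" .
  then show ?thesis
    by (rule that[OF k t(1,2), rotated]) (simp add: t_def u_def)
qed

lemma sum_hat_eq_1:
  assumes "n \<ge> 1" "0 \<le> x" "x \<le> 1"
  shows "(\<Sum>j\<in>{1..n+1}. hat n j x) = 1"
  by (rule sum_hat_interpolation[OF assms, of "\<lambda>_. 1"]) auto

lemma sum_powr_hat_le:
  assumes n: "n \<ge> 1" and x: "0 \<le> x" "x \<le> 1" and \<alpha>: "0 < \<alpha>" "\<alpha> \<le> 1"
  shows "(\<Sum>j\<in>{1..n+1}. (real (j - 1) / real n) powr \<alpha> * hat n j x) \<le> x powr \<alpha>"
proof -
  obtain k t where kt: "k \<in> {1..n}" "0 \<le> t" "t \<le> 1" "real n * x = real (k - 1) + t"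
    and sum_eq: "(\<Sum>j\<in>{1..n+1}. (real (j - 1) / real n) powr \<alpha> * hat n j x)
       = (1 - t) * (real (k - 1) / real n) powr \<alpha> + t * (real (k + 1 - 1) / real n) powr \<alpha>"
    by (rule sum_hat_interpolation[OF n x])
  have "(1 - t) * (real (k - 1) / real n) + t * (real (k + 1 - 1) / real n) = x"
    using kt n by (simp add: field_simps of_nat_diff)
  moreover have "(1 - t) * (real (k - 1) / real n) powr \<alpha> + t * (real (k + 1 - 1) / real n) powr \<alpha>
      \<le> ((1 - t) * (real (k - 1) / real n) + t * (real (k + 1 - 1) / real n)) powr \<alpha>"
    by (rule powr_convex_combination_ge) (use \<alpha> kt in auto)
  ultimately show ?thesis using sum_eq by simp
qed

definition dirac_sum :: "nat set \<Rightarrow> (nat \<Rightarrow> real) \<Rightarrow> (nat \<Rightarrow> real) \<Rightarrow> real measure" where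
  "dirac_sum J xs ms = distr (density (count_space J) (\<lambda>j. ennreal (ms j))) borel xs"

lemma sets_dirac_sum [simp, measurable_cong]: "sets (dirac_sum J xs ms) = sets borel"
  by (simp add: dirac_sum_def)

lemma space_dirac_sum [simp]: "space (dirac_sum J xs ms) = UNIV"
  by (simp add: dirac_sum_def)

lemma emeasure_dirac_sum:
  assumes "finite J" "\<And>j. j \<in> J \<Longrightarrow> ms j \<ge> 0" "A \<in> sets borel"
  shows "emeasure (dirac_sum J xs ms) A = ennreal (\<Sum>j\<in>J. ms j * indicator A (xs j))"
proof -
  have "emeasure (dirac_sum J xs ms) A
      = emeasure (density (count_space J) (\<lambda>j. ennreal (ms j))) (xs -` A \<inter> J)"
    unfolding dirac_sum_def using assms by (subst emeasure_distr) auto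
  also have "\<dots> = (\<integral>\<^sup>+ j. ennreal (ms j) * indicator (xs -` A \<inter> J) j \<partial>count_space J)"
    by (subst emeasure_density) auto
  also have "\<dots> = (\<Sum>j\<in>J. ennreal (ms j) * indicator (xs -` A \<inter> J) j)"
    using assms by (simp add: nn_integral_count_space_finite)
  also have "\<dots> = (\<Sum>j\<in>J. ennreal (ms j * indicator A (xs j)))"
    by (intro sum.cong) (auto simp: indicator_def)
  also have "\<dots> = ennreal (\<Sum>j\<in>J. ms j * indicator A (xs j))"
    using assms by (intro sum_ennreal) auto
  finally show ?thesis .
qed

lemma point_masses_eq_dirac_sum:
  assumes "finite J" "\<And>j. j \<in> J \<Longrightarrow> ms j \<ge> 0"
  shows "point_masses J xs ms = dirac_sum J xs ms"
proof -
  have "dirac_sum J xs ms = measure_of UNIV (sets borel) (emeasure (dirac_sum J xs ms))"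
    using measure_of_of_measure[of "dirac_sum J xs ms"] by simp
  also have "\<dots> = point_masses J xs ms"
    unfolding point_masses_def
  proof (rule measure_of_eq)
    fix A :: "real set" assume "A \<in> sigma_sets UNIV (sets borel)"
    then have "A \<in> sets borel" by (metis sets.sigma_sets_eq space_borel)
    then show "emeasure (dirac_sum J xs ms) A = ennreal (\<Sum>j\<in>J. ms j * indicator A (xs j))"
      using emeasure_dirac_sum assms by blast
  qed simp
  finally show ?thesis ..
qed

lemma nn_integral_dirac_sum:
  assumes "finite J" "\<And>j. j \<in> J \<Longrightarrow> ms j \<ge> 0" "f \<in> borel_measurable borel"
  shows "(\<integral>\<^sup>+ x. f x \<partial>dirac_sum J xs ms) = (\<Sum>j\<in>J. ennreal (ms j) * f (xs j))"
proof -
  have "(\<integral>\<^sup>+ x. f x \<partial>dirac_sum J xs ms)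
      = (\<integral>\<^sup>+ j. f (xs j) \<partial>density (count_space J) (\<lambda>j. ennreal (ms j)))"
    unfolding dirac_sum_def using assms by (subst nn_integral_distr) auto
  also have "\<dots> = (\<integral>\<^sup>+ j. ennreal (ms j) * f (xs j) \<partial>count_space J)"
    by (subst nn_integral_density) auto
  also have "\<dots> = (\<Sum>j\<in>J. ennreal (ms j) * f (xs j))"
    using assms by (simp add: nn_integral_count_space_finite)
  finally show ?thesis .
qed

lemma prob_space_dirac_sum:
  assumes "finite J" "\<And>j. j \<in> J \<Longrightarrow> ms j \<ge> 0" "(\<Sum>j\<in>J. ms j) = 1"
  shows "prob_space (dirac_sum J xs ms)"
  by standard (use emeasure_dirac_sum[OF assms(1,2), where A=UNIV and xs=xs] assms(3) in simp)

lemma indicator_window_swap: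
  fixes x y b :: real
  shows "indicator {x - b<..<x + b} y = (indicator {y - b<..<y + b} x :: ennreal)"
  by (auto simp: indicator_def)

lemma window_kernel_measurable:
  fixes M N :: "real measure"
  assumes "sets M = sets borel" "sets N = sets borel" "f \<in> borel_measurable borel"
  shows "(\<lambda>(x, y). f y * indicator {x - b<..<x + b} y :: ennreal) \<in> borel_measurable (M \<Otimes>\<^sub>M N)"
proof -
  have "(\<lambda>(x, y). f y * indicator {x - b<..<x + b} y :: ennreal) =
        (\<lambda>p. if fst p - b < snd p \<and> snd p < fst p + b then f (snd p) else 0)"
    by (auto simp: indicator_def fun_eq_iff)
  moreover have "(\<lambda>p. if fst p - b < snd p \<and> snd p < fst p + b then f (snd p) else 0)
      \<in> borel_measurable (borel \<Otimes>\<^sub>M borel)"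
    using assms(3) by measurable
  moreover have "sets (M \<Otimes>\<^sub>M N) = sets (borel \<Otimes>\<^sub>M borel)"
    by (intro sets_pair_measure_cong) (auto simp: assms(1,2))
  ultimately show ?thesis
    by (subst measurable_cong_sets[OF _ refl]) auto
qed

lemma nn_integral_window_Fubini:
  fixes M :: "real measure"
  assumes "sigma_finite_measure M" "sets M = sets borel" "f \<in> borel_measurable borel"
  shows "(\<integral>\<^sup>+ x. (\<integral>\<^sup>+ y. f y * indicator {x - b<..<x + b} y \<partial>lborel) \<partial>M)
       = (\<integral>\<^sup>+ y. f y * emeasure M {y - b<..<y + b} \<partial>lborel)"
proof -
  interpret pair_sigma_finite M lborel
    by (intro pair_sigma_finite.intro assms(1) lborel.sigma_finite_measure_axioms)
  have "(\<integral>\<^sup>+ x. (\<integral>\<^sup>+ y. f y * indicator {x - b<..<x + b} y \<partial>lborel) \<partial>M)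
      = (\<integral>\<^sup>+ y. (\<integral>\<^sup>+ x. f y * indicator {y - b<..<y + b} x \<partial>M) \<partial>lborel)"
    using Fubini'[OF window_kernel_measurable[OF assms(2) _ assms(3)]]
    by (simp add: indicator_window_swap)
  also have "\<dots> = (\<integral>\<^sup>+ y. f y * emeasure M {y - b<..<y + b} \<partial>lborel)"
    using assms(2) by (simp add: nn_integral_cmult_indicator)
  finally show ?thesis .
qed

lemma window_emeasure_measurable:
  fixes M :: "real measure"
  assumes "sigma_finite_measure M" "sets M = sets borel"
  shows "(\<lambda>y. emeasure M {y - b<..<y + b}) \<in> borel_measurable borel"
proof -
  interpret sigma_finite_measure M by fact
  have "(\<lambda>y. \<integral>\<^sup>+ x. 1 * indicator {y - b<..<y + b} x \<partial>M) \<in> borel_measurable borel"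
    by (rule borel_measurable_nn_integral)
      (rule window_kernel_measurable[where f="\<lambda>_. 1"], use assms(2) in simp_all)
  then show ?thesis using assms(2) by simp
qed

lemma emeasure_lborel_Ioo_Int:
  fixes a b c d :: real
  shows "emeasure lborel ({a<..<b} \<inter> {c<..<d}) = ennreal (min b d - max a c)"
proof -
  have eq: "{a<..<b} \<inter> {c<..<d} = {max a c<..<min b d}" by auto
  show ?thesis
  proof (cases "max a c \<le> min b d")
    case True then show ?thesis unfolding eq by (rule emeasure_lborel_Ioo)
  next
    case False
    then have "{max a c<..<min b d} = {}" "min b d - max a c \<le> 0" by auto
    then show ?thesis unfolding eq using ennreal_neg[of "min b d - max a c"] by simp
  qed
qed

lemma AE_lborel_obtain_between:
  fixes u v :: real
  assumes "AE y in lborel. P y" "u < v"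
  obtains y where "u < y" "y < v" "P y"
proof (rule ccontr)
  assume "\<not> thesis"
  with that have sub: "{u<..<v} \<subseteq> {y. \<not> P y}" by auto
  from assms(1) obtain N where N: "{y \<in> space lborel. \<not> P y} \<subseteq> N" "N \<in> null_sets lborel"
    by (rule AE_E) (blast intro: null_setsI)
  have "emeasure lborel {u<..<v} \<le> emeasure lborel N"
    using sub N by (intro emeasure_mono) auto
  then have "emeasure lborel {u<..<v} = 0" using N by auto
  then show False using assms(2) by simp
qed

lemma real_distribution_eqI_cdf_cofinite:
  assumes "real_distribution M1" "real_distribution M2" "finite F"
    and "\<And>s. s \<notin> F \<Longrightarrow> cdf M1 s = cdf M2 s"
  shows "M1 = M2"
proof (rule cdf_unique[OF assms(1,2)], rule ext)
  fix s
  have "open (- (F - {s}))" using assms(3) by (intro open_Compl finite_imp_closed) simp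
  then have "eventually (\<lambda>t. t \<notin> F) (at_right s)"
    unfolding eventually_at_topological by (intro exI[of _ "- (F - {s})"]) auto
  then have "eventually (\<lambda>t. cdf M1 t = cdf M2 t) (at_right s)"
    by eventually_elim (rule assms(4))
  moreover have "(cdf M1 \<longlongrightarrow> cdf M1 s) (at_right s)" "(cdf M2 \<longlongrightarrow> cdf M2 s) (at_right s)"
    using assms(1,2)[THEN real_distribution.finite_borel_measure_M,
        THEN finite_borel_measure.cdf_is_right_cont]
    by (simp_all add: continuous_within)
  ultimately have "(cdf M2 \<longlongrightarrow> cdf M1 s) (at_right s)" "(cdf M2 \<longlongrightarrow> cdf M2 s) (at_right s)"
    using tendsto_cong by blast+
  then show "cdf M1 s = cdf M2 s"
    using tendsto_unique[of "at_right s"] by simp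
qed

lemma admissible_input_prob_space: "admissible_input M \<Longrightarrow> prob_space M"
  by (simp add: admissible_input_def)

lemma sets_admissible_input: "admissible_input M \<Longrightarrow> sets M = sets borel"
  by (simp add: admissible_input_def)

lemma admissible_input_real_distribution: "admissible_input M \<Longrightarrow> real_distribution M"
  by (simp add: admissible_input_def real_distribution_def real_distribution_axioms_def)

lemma admissible_input_AE_unit_interval:
  assumes "admissible_input M" shows "AE x in M. x \<in> {0..1}"
proof -
  interpret prob_space M using assms by (rule admissible_input_prob_space)
  show ?thesis using assms
    by (subst AE_in_set_eq_1) (auto simp: admissible_input_def emeasure_eq_measure)
qed

lemma admissible_input_null_outside:
  assumes "admissible_input M" "A \<in> sets borel" "A \<inter> {0..1} = {}"
  shows "emeasure M A = 0"
proof -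
  have "AE x in M. x \<notin> A"
    using admissible_input_AE_unit_interval[OF assms(1)] by eventually_elim (use assms(3) in auto)
  then show ?thesis using assms(2) sets_admissible_input[OF assms(1)]
    by (subst AE_iff_measurable[symmetric, where P="\<lambda>x. x \<notin> A"])
      (auto dest: sets_eq_imp_space_eq)
qed

locale grid_masses =
  fixes n :: nat and m :: "nat \<Rightarrow> real"
  assumes n_ge_1: "n \<ge> 1"
    and m_pos: "\<And>j. j \<in> {1..n+1} \<Longrightarrow> m j > 0"
    and sum_m: "(\<Sum>j\<in>{1..n+1}. m j) = 1"
begin

definition half_width :: real where "half_width = 1 / (2 * real n)"
definition node :: "nat \<Rightarrow> real" where "node j = real (j - 1) / real n"
definition cell :: "nat \<Rightarrow> real set" where
  "cell j = {node j - half_width<..<node j + half_width}"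
definition cell_mass :: "real \<Rightarrow> real" where
  "cell_mass y = (\<Sum>j\<in>{1..n+1}. m j * indicator (cell j) y)"
definition surprisal :: "real \<Rightarrow> real" where
  "surprisal y = (\<Sum>j\<in>{1..n+1}. ln (1 / m j) * indicator (cell j) y)"

lemma n_pos: "real n > 0"
  using n_ge_1 by simp

lemma half_width_pos: "half_width > 0"
  using n_ge_1 by (simp add: half_width_def)

lemma unif_r_half_width: "unif_r half_width = real n"
  using n_pos by (simp add: unif_r_def half_width_def)

lemma m_le_1: "j \<in> {1..n+1} \<Longrightarrow> m j \<le> 1"
  using member_le_sum[of j "{1..n+1}" m] m_pos sum_m by (simp add: less_imp_le)

lemma cell_measurable [measurable]: "cell j \<in> sets borel"
  by (simp add: cell_def)

lemma emeasure_cell: "emeasure lborel (cell j) = ennreal (1 / real n)"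
  unfolding cell_def using half_width_pos by (simp add: half_width_def)

lemma cell_disjoint:
  assumes "y \<in> cell j" "y \<in> cell k" "j \<ge> 1" "k \<ge> 1" shows "j = k"
proof (rule ccontr)
  assume "j \<noteq> k"
  then have "\<bar>real (j - 1) - real (k - 1)\<bar> \<ge> 1" using assms by (auto simp: of_nat_diff)
  then have "\<bar>node j - node k\<bar> \<ge> 1 / real n" using n_pos
    by (simp add: node_def diff_divide_distrib[symmetric] abs_divide le_divide_eq)
  moreover have "\<bar>node j - node k\<bar> < 2 * half_width" using assms by (auto simp: cell_def)
  ultimately show False by (simp add: half_width_def)
qed

lemma sum_indicator_cell:
  assumes "y \<in> cell k" "k \<in> {1..n+1}"
  shows "(\<Sum>j\<in>{1..n+1}. f j * indicator (cell j) y) = (f k :: real)"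
proof -
  have "(\<Sum>j\<in>{1..n+1}. f j * indicator (cell j) y) = (\<Sum>j\<in>{k}. f j * indicator (cell j) y)"
    by (rule sum.mono_neutral_right) (use assms cell_disjoint in \<open>auto simp: indicator_def\<close>)
  then show ?thesis using assms by simp
qed

lemma cell_mass_eq: "y \<in> cell k \<Longrightarrow> k \<in> {1..n+1} \<Longrightarrow> cell_mass y = m k"
  unfolding cell_mass_def by (rule sum_indicator_cell)

lemma surprisal_eq: "y \<in> cell k \<Longrightarrow> k \<in> {1..n+1} \<Longrightarrow> surprisal y = ln (1 / m k)"
  unfolding surprisal_def by (rule sum_indicator_cell)

lemma cell_mass_nonneg: "cell_mass y \<ge> 0"
  unfolding cell_mass_def using m_pos by (intro sum_nonneg) (auto simp: less_imp_le)

lemma surprisal_nonneg: "surprisal y \<ge> 0"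
  unfolding surprisal_def using m_pos m_le_1 by (intro sum_nonneg mult_nonneg_nonneg) auto

lemma cell_mass_measurable [measurable]: "cell_mass \<in> borel_measurable borel"
  unfolding cell_mass_def by measurable

lemma surprisal_measurable [measurable]: "surprisal \<in> borel_measurable borel"
  unfolding surprisal_def by measurable

definition cell_boundaries :: "real set" where
  "cell_boundaries = (\<lambda>j. node j + half_width) ` {1..n}"

lemma AE_not_cell_boundary: "AE y in lborel. y \<notin> cell_boundaries"
  by (rule AE_not_in) (simp add: countable_imp_null_set_lborel countable_finite cell_boundaries_def)

lemma cells_cover:
  assumes "-half_width < y" "y < 1 + half_width" "y \<notin> cell_boundaries"
  obtains k where "k \<in> {1..n+1}" "y \<in> cell k"
proof -
  define u where "u = real n * y + 1/2"
  have nb: "real n * half_width = 1/2" using n_pos by (simp add: half_width_def)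
  have "real n * (-half_width) < real n * y" by (rule mult_strict_left_mono[OF assms(1) n_pos])
  then have u0: "0 < u" using nb by (simp add: u_def)
  have "real n * y < real n * (1 + half_width)" by (rule mult_strict_left_mono[OF assms(2) n_pos])
  then have un: "u < real n + 1" using nb by (simp add: u_def distrib_left)
  define k where "k = nat \<lfloor>u\<rfloor> + 1"
  have kr: "real (k - 1) = of_int \<lfloor>u\<rfloor>" using u0 by (simp add: k_def)
  have k: "k \<in> {1..n+1}" using u0 un by (simp add: k_def) linarith
  have floor_u: "real (k - 1) \<le> u" "u < real (k - 1) + 1" using kr by linarith+
  have "u \<noteq> real (k - 1)"
  proof
    assume eq: "u = real (k - 1)"
    then have "k - 1 \<ge> 1" using u0 by (cases "k - 1") auto
    moreover have "k - 1 \<le> n" using k by auto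
    moreover have "y = node (k - 1) + half_width"
    proof -
      have "real n * y = real (k - 1) - 1/2" using eq by (simp add: u_def)
      also have "\<dots> = real n * (node (k - 1) + half_width)"
        using n_pos \<open>k - 1 \<ge> 1\<close> by (simp add: node_def half_width_def field_simps of_nat_diff)
      finally show ?thesis using n_pos by simp
    qed
    ultimately show False using assms(3) by (auto simp: cell_boundaries_def)
  qed
  moreover have "real n * (node k - half_width) = real (k - 1) - 1/2"
    "real n * (node k + half_width) = real (k - 1) + 1/2"
    using n_pos by (simp_all add: node_def half_width_def field_simps)
  ultimately have "real n * (node k - half_width) < real n * y" "real n * y < real n * (node k + half_width)"
    using floor_u by (simp_all add: u_def)
  then have "y \<in> cell k" using n_pos by (auto simp: cell_def mult_less_cancel_left_pos)
  with k show ?thesis by (rule that)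
qed

lemma emeasure_cell_Int_window:
  "emeasure lborel (cell j \<inter> {x - half_width<..<x + half_width}) = ennreal (hat n j x / real n)"
proof -
  have e: "min (node j + half_width) (x + half_width) - max (node j - half_width) (x - half_width)
      = 1 / real n - \<bar>x - node j\<bar>"
    by (simp add: half_width_def min_def max_def)
  have "real n * x - real (j - 1) = real n * (x - node j)"
    using n_pos by (simp add: node_def field_simps)
  then have "\<bar>real n * x - real (j - 1)\<bar> = real n * \<bar>x - node j\<bar>"
    by (simp add: abs_mult)
  then have "hat n j x / real n = max 0 (1 / real n - \<bar>x - node j\<bar>)"
    unfolding hat_def using n_pos
    by (cases "1 / real n - \<bar>x - node j\<bar> \<le> 0") (auto simp: max_def field_simps)
  then show ?thesis unfolding cell_def emeasure_lborel_Ioo_Int e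
    by (simp add: ennreal_max_0)
qed

lemma hat_node: "j \<ge> 1 \<Longrightarrow> k \<ge> 1 \<Longrightarrow> hat n j (node k) = (if j = k then 1 else 0)"
proof -
  assume jk: "j \<ge> 1" "k \<ge> 1"
  have e: "real n * node k - real (j - 1) = real (k - 1) - real (j - 1)"
    using n_pos by (simp add: node_def)
  show ?thesis
  proof (cases "j = k")
    case False
    then have "\<bar>real (k - 1) - real (j - 1)\<bar> \<ge> 1" using jk by (auto simp: of_nat_diff)
    then show ?thesis using False unfolding hat_def e by simp
  qed (unfold hat_def e, simp)
qed

lemma nn_integral_cell_mass: "(\<integral>\<^sup>+ y. ennreal (real n * cell_mass y) \<partial>lborel) = 1"
proof -
  have "(\<integral>\<^sup>+ y. ennreal (real n * cell_mass y) \<partial>lborel)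
      = (\<integral>\<^sup>+ y. (\<Sum>j\<in>{1..n+1}. ennreal (real n * m j) * indicator (cell j) y) \<partial>lborel)"
  proof (rule nn_integral_cong)
    fix y
    have "ennreal (real n * cell_mass y)
        = (\<Sum>j\<in>{1..n+1}. ennreal (real n * m j * indicator (cell j) y))"
      unfolding cell_mass_def sum_distrib_left mult.assoc
      using m_pos by (intro sum_ennreal[symmetric]) (auto simp: less_imp_le)
    also have "\<dots> = (\<Sum>j\<in>{1..n+1}. ennreal (real n * m j) * indicator (cell j) y)"
      by (intro sum.cong) (auto simp: indicator_def)
    finally show "ennreal (real n * cell_mass y) = \<dots>" .
  qed
  also have "\<dots> = (\<Sum>j\<in>{1..n+1}. ennreal (m j))"
    using m_pos n_pos
    by (subst nn_integral_sum)
      (auto simp: nn_integral_cmult_indicator emeasure_cell ennreal_mult[symmetric] less_imp_le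
        intro!: sum.cong)
  also have "\<dots> = 1" using m_pos sum_m by (subst sum_ennreal) (auto simp: less_imp_le)
  finally show ?thesis .
qed

lemma nn_integral_surprisal_window:
  "(\<integral>\<^sup>+ y. ennreal (real n * surprisal y) * indicator {x - half_width<..<x + half_width} y \<partial>lborel)
   = ennreal (\<Sum>j\<in>{1..n+1}. ln (1 / m j) * hat n j x)"
proof -
  let ?W = "{x - half_width<..<x + half_width}"
  have ln_nonneg: "j \<in> {1..n+1} \<Longrightarrow> ln (1 / m j) \<ge> 0" for j using m_pos m_le_1 by simp
  have "(\<integral>\<^sup>+ y. ennreal (real n * surprisal y) * indicator ?W y \<partial>lborel)
      = (\<integral>\<^sup>+ y. (\<Sum>j\<in>{1..n+1}. ennreal (real n * ln (1 / m j)) * indicator (cell j \<inter> ?W) y) \<partial>lborel)"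
  proof (rule nn_integral_cong)
    fix y
    have "ennreal (real n * surprisal y)
        = (\<Sum>j\<in>{1..n+1}. ennreal (real n * ln (1 / m j) * indicator (cell j) y))"
      unfolding surprisal_def sum_distrib_left mult.assoc
      using ln_nonneg by (intro sum_ennreal[symmetric]) auto
    then have "ennreal (real n * surprisal y) * indicator ?W y
        = (\<Sum>j\<in>{1..n+1}. ennreal (real n * ln (1 / m j) * indicator (cell j) y)) * indicator ?W y"
      by simp
    also have "\<dots> = (\<Sum>j\<in>{1..n+1}. ennreal (real n * ln (1 / m j)) * indicator (cell j \<inter> ?W) y)"
      by (subst sum_distrib_right) (intro sum.cong, auto simp: indicator_def)
    finally show "ennreal (real n * surprisal y) * indicator ?W y = \<dots>" .
  qed
  also have "\<dots> = (\<Sum>j\<in>{1..n+1}. ennreal (real n * ln (1 / m j)) * emeasure lborel (cell j \<inter> ?W))"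
    by (subst nn_integral_sum) (auto simp: nn_integral_cmult_indicator)
  also have "\<dots> = (\<Sum>j\<in>{1..n+1}. ennreal (ln (1 / m j) * hat n j x))"
    unfolding emeasure_cell_Int_window using n_pos ln_nonneg hat_nonneg
    by (intro sum.cong refl) (subst ennreal_mult[symmetric], auto)
  also have "\<dots> = ennreal (\<Sum>j\<in>{1..n+1}. ln (1 / m j) * hat n j x)"
    using ln_nonneg hat_nonneg by (intro sum_ennreal) auto
  finally show ?thesis .
qed

definition window_prob :: "real measure \<Rightarrow> real \<Rightarrow> real" where
  "window_prob M y = measure M {y - half_width<..<y + half_width}"

text \<open>Write p = cell_mass y and g = window_prob M y. Where g vanishes, the step density is missed
  entirely; elsewhere p/g - 1 - ln (p/g) \<ge> 0 is the pointwise slack in Gibbs' inequality.\<close>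

definition gibbs_slack :: "real measure \<Rightarrow> real \<Rightarrow> real" where
  "gibbs_slack M y = (if window_prob M y > 0 \<and> cell_mass y > 0
     then cell_mass y / window_prob M y - 1 - ln (cell_mass y / window_prob M y) else 0)"

definition covered_density :: "real measure \<Rightarrow> real \<Rightarrow> real" where
  "covered_density M y = (if window_prob M y > 0 then real n * cell_mass y else 0)"

definition missed_density :: "real measure \<Rightarrow> real \<Rightarrow> real" where
  "missed_density M y = (if window_prob M y = 0 then real n * cell_mass y else 0)"

definition expected_surprisal :: "real measure \<Rightarrow> ennreal" where
  "expected_surprisal M = (\<integral>\<^sup>+ x. ennreal (\<Sum>j\<in>{1..n+1}. ln (1 / m j) * hat n j x) \<partial>M)"

definition slack_integral :: "real measure \<Rightarrow> ennreal" where
  "slack_integral M = (\<integral>\<^sup>+ y. ennreal (real n * window_prob M y * gibbs_slack M y) \<partial>lborel)"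

definition missed_integral :: "real measure \<Rightarrow> ennreal" where
  "missed_integral M = (\<integral>\<^sup>+ y. ennreal (missed_density M y) \<partial>lborel)"

lemma gibbs_slack_nonneg: "gibbs_slack M y \<ge> 0"
  unfolding gibbs_slack_def using ln_le_minus_one[of "cell_mass y / window_prob M y"] by auto

lemma window_prob_nonneg: "0 \<le> window_prob M y"
  by (simp add: window_prob_def)

context
  fixes M assumes adm: "admissible_input M"
begin

lemma emeasure_window: "emeasure M {y - half_width<..<y + half_width} = ennreal (window_prob M y)"
proof -
  interpret prob_space M by (rule admissible_input_prob_space[OF adm])
  show ?thesis by (simp add: window_prob_def emeasure_eq_measure)
qed

lemma window_prob_le_1: "window_prob M y \<le> 1"
  using admissible_input_prob_space[OF adm] by (simp add: window_prob_def prob_space.prob_le_1)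

lemma window_prob_measurable [measurable]: "window_prob M \<in> borel_measurable borel"
proof -
  have "(\<lambda>y. enn2real (emeasure M {y - half_width<..<y + half_width})) \<in> borel_measurable borel"
    using window_emeasure_measurable[OF _ sets_admissible_input[OF adm]]
      admissible_input_prob_space[OF adm] prob_space_imp_sigma_finite by measurable
  then show ?thesis by (simp add: emeasure_window window_prob_nonneg)
qed

lemma window_prob_pos_imp_near_unit_interval:
  assumes "window_prob M y > 0" shows "-half_width < y" "y < 1 + half_width"
proof -
  have "emeasure M {y - half_width<..<y + half_width} \<noteq> 0"
    using assms by (simp add: emeasure_window)
  then have "{y - half_width<..<y + half_width} \<inter> {0..1} \<noteq> {}"
    using admissible_input_null_outside[OF adm] by auto
  then show "-half_width < y" "y < 1 + half_width" by auto
qed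

lemma mutual_info_eq_entropy_integral:
  "mutual_info half_width M
     = (\<integral>\<^sup>+ y. ennreal (real n * window_prob M y * ln (1 / window_prob M y)) \<partial>lborel)"
proof -
  define F where "F y = (if window_prob M y = 0 then \<infinity>
    else ennreal (real n * ln (1 / window_prob M y)))" for y
  have F_measurable: "F \<in> borel_measurable borel"
    unfolding F_def by measurable
  have info_dens_eq: "info_dens half_width M
      = (\<lambda>x. \<integral>\<^sup>+ y. F y * indicator {x - half_width<..<x + half_width} y \<partial>lborel)"
    unfolding info_dens_def using n_pos
    by (intro ext nn_integral_cong)
      (auto simp: pY_def pN_def unif_r_half_width F_def indicator_def window_prob_def[symmetric])
  have "mutual_info half_width M = (\<integral>\<^sup>+ y. F y * emeasure M {y - half_width<..<y + half_width} \<partial>lborel)"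
    unfolding mutual_info_def info_dens_eq
    by (rule nn_integral_window_Fubini[OF prob_space_imp_sigma_finite[OF admissible_input_prob_space[OF adm]]
        sets_admissible_input[OF adm] F_measurable])
  also have "\<dots> = (\<integral>\<^sup>+ y. ennreal (real n * window_prob M y * ln (1 / window_prob M y)) \<partial>lborel)"
  proof (rule nn_integral_cong)
    fix y
    show "F y * emeasure M {y - half_width<..<y + half_width}
        = ennreal (real n * window_prob M y * ln (1 / window_prob M y))"
    proof (cases "window_prob M y = 0")
      case False
      then have "ln (1 / window_prob M y) \<ge> 0" "window_prob M y > 0"
        using window_prob_nonneg[of M y] window_prob_le_1[of y] by auto
      then show ?thesis using False
        by (simp add: F_def emeasure_window ennreal_mult[symmetric] mult_ac)
    qed (simp add: F_def emeasure_window)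
  qed
  finally show ?thesis .
qed

lemma nn_integral_window_prob: "(\<integral>\<^sup>+ y. ennreal (real n * window_prob M y) \<partial>lborel) = 1"
proof -
  interpret prob_space M by (rule admissible_input_prob_space[OF adm])
  have "(\<integral>\<^sup>+ y. ennreal (real n * window_prob M y) \<partial>lborel)
      = (\<integral>\<^sup>+ y. ennreal (real n) * emeasure M {y - half_width<..<y + half_width} \<partial>lborel)"
    by (intro nn_integral_cong) (simp add: emeasure_window ennreal_mult window_prob_nonneg)
  also have "\<dots> = (\<integral>\<^sup>+ x. (\<integral>\<^sup>+ y. ennreal (real n) * indicator {x - half_width<..<x + half_width} y \<partial>lborel) \<partial>M)"
    by (rule nn_integral_window_Fubini[symmetric])
      (simp_all add: prob_space_imp_sigma_finite prob_space_axioms sets_admissible_input[OF adm])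
  also have "\<dots> = (\<integral>\<^sup>+ x. 1 \<partial>M)"
    using n_pos half_width_pos
    by (intro nn_integral_cong)
      (simp add: nn_integral_cmult_indicator ennreal_mult[symmetric] half_width_def)
  finally show ?thesis by (simp add: emeasure_space_1)
qed

lemma nn_integral_window_prob_surprisal:
  "(\<integral>\<^sup>+ y. ennreal (real n * window_prob M y * surprisal y) \<partial>lborel) = expected_surprisal M"
proof -
  have "(\<integral>\<^sup>+ y. ennreal (real n * window_prob M y * surprisal y) \<partial>lborel)
      = (\<integral>\<^sup>+ y. ennreal (real n * surprisal y) * emeasure M {y - half_width<..<y + half_width} \<partial>lborel)"
    using surprisal_nonneg n_pos
    by (intro nn_integral_cong)
      (simp add: emeasure_window ennreal_mult[symmetric] window_prob_nonneg mult_ac)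
  also have "\<dots> = (\<integral>\<^sup>+ x. (\<integral>\<^sup>+ y. ennreal (real n * surprisal y)
      * indicator {x - half_width<..<x + half_width} y \<partial>lborel) \<partial>M)"
    by (rule nn_integral_window_Fubini[symmetric])
      (simp_all add: prob_space_imp_sigma_finite admissible_input_prob_space[OF adm]
        sets_admissible_input[OF adm])
  finally show ?thesis unfolding expected_surprisal_def nn_integral_surprisal_window .
qed

lemma covered_missed_integral:
  "(\<integral>\<^sup>+ y. ennreal (covered_density M y) \<partial>lborel) + missed_integral M = 1"
proof -
  have "(\<integral>\<^sup>+ y. ennreal (covered_density M y) \<partial>lborel) + missed_integral M
      = (\<integral>\<^sup>+ y. ennreal (covered_density M y) + ennreal (missed_density M y) \<partial>lborel)"
    unfolding missed_integral_def covered_density_def missed_density_def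
    by (rule nn_integral_add[symmetric]) auto
  also have "\<dots> = (\<integral>\<^sup>+ y. ennreal (real n * cell_mass y) \<partial>lborel)"
    using cell_mass_nonneg window_prob_nonneg[of M]
    by (intro nn_integral_cong) (auto simp: covered_density_def missed_density_def less_le)
  finally show ?thesis using nn_integral_cell_mass by simp
qed

lemma gibbs_identity_pointwise:
  assumes "y \<notin> cell_boundaries"
  shows "ennreal (real n * window_prob M y * ln (1 / window_prob M y)) + ennreal (real n * window_prob M y)
      + ennreal (real n * window_prob M y * gibbs_slack M y)
    = ennreal (real n * window_prob M y * surprisal y) + ennreal (covered_density M y)"
proof (cases "window_prob M y > 0")
  case False
  then show ?thesis using window_prob_nonneg[of M y] by (simp add: covered_density_def)
next
  case True
  obtain k where k: "k \<in> {1..n+1}" "y \<in> cell k"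
    using cells_cover[OF window_prob_pos_imp_near_unit_interval[OF True] assms] by blast
  define g where "g = window_prob M y"
  define p where "p = m k"
  have p: "p > 0" "p \<le> 1" using m_pos[OF k(1)] m_le_1[OF k(1)] by (auto simp: p_def)
  have g: "g > 0" "g \<le> 1" using True window_prob_le_1 by (auto simp: g_def)
  have slack: "gibbs_slack M y = p / g - 1 - ln (p / g)" and slack_nonneg: "p / g - 1 - ln (p / g) \<ge> 0"
    using True p ln_le_minus_one[of "p / g"] g
    by (simp_all add: gibbs_slack_def cell_mass_eq[OF k(2,1)] g_def p_def)
  have "real n * g * ln (1 / g) + real n * g + real n * g * (p / g - 1 - ln (p / g))
      = real n * g * ln (1 / p) + real n * p"
    using p g by (simp add: ln_div field_simps)
  moreover have "ln (1 / g) \<ge> 0" "ln (1 / p) \<ge> 0" using p g by auto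
  ultimately show ?thesis
    using True slack_nonneg g p n_pos
    by (simp add: slack covered_density_def cell_mass_eq[OF k(2,1)] surprisal_eq[OF k(2,1)]
        g_def[symmetric] p_def[symmetric] ennreal_plus[symmetric] del: ennreal_plus)
qed

text \<open>Integrate the pointwise identity: n g and n p both have total mass 1, so the term
  \<integral> n g on the left cancels against the covered and missed parts of \<integral> n p.\<close>

lemma mutual_info_add_slack:
  "mutual_info half_width M + slack_integral M + missed_integral M = expected_surprisal M"
proof -
  have "(\<integral>\<^sup>+ y. ennreal (real n * window_prob M y * ln (1 / window_prob M y))
        + ennreal (real n * window_prob M y) + ennreal (real n * window_prob M y * gibbs_slack M y) \<partial>lborel)
      = (\<integral>\<^sup>+ y. ennreal (real n * window_prob M y * surprisal y) + ennreal (covered_density M y) \<partial>lborel)"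
    using AE_not_cell_boundary by (rule nn_integral_cong_AE[OF AE_mp]) (auto intro: gibbs_identity_pointwise)
  moreover have "(\<integral>\<^sup>+ y. ennreal (real n * window_prob M y * ln (1 / window_prob M y))
        + ennreal (real n * window_prob M y) + ennreal (real n * window_prob M y * gibbs_slack M y) \<partial>lborel)
      = mutual_info half_width M + 1 + slack_integral M"
    unfolding mutual_info_eq_entropy_integral slack_integral_def nn_integral_window_prob[symmetric]
    by (subst nn_integral_add; simp add: gibbs_slack_def)+
  moreover have "(\<integral>\<^sup>+ y. ennreal (real n * window_prob M y * surprisal y) + ennreal (covered_density M y) \<partial>lborel)
      = expected_surprisal M + (\<integral>\<^sup>+ y. ennreal (covered_density M y) \<partial>lborel)"
    unfolding nn_integral_window_prob_surprisal[symmetric]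
    by (subst nn_integral_add) (auto simp: covered_density_def)
  ultimately have "1 + (mutual_info half_width M + slack_integral M + missed_integral M)
      = 1 + expected_surprisal M"
    using covered_missed_integral by (metis add.assoc add.commute)
  then show ?thesis by (simp add: ennreal_add_left_cancel)
qed

lemma window_prob_AE_eq_cell_mass:
  assumes "slack_integral M = 0" "missed_integral M = 0"
  shows "AE y in lborel. window_prob M y = cell_mass y"
proof -
  have "AE y in lborel. ennreal (real n * window_prob M y * gibbs_slack M y) = 0"
    using assms(1) unfolding slack_integral_def
    by (subst (asm) nn_integral_0_iff_AE) (auto simp: gibbs_slack_def)
  moreover have "AE y in lborel. ennreal (missed_density M y) = 0"
    using assms(2) unfolding missed_integral_def
    by (subst (asm) nn_integral_0_iff_AE) (auto simp: missed_density_def)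
  ultimately show ?thesis using AE_not_cell_boundary
  proof eventually_elim
    case (elim y)
    show ?case
    proof (cases "window_prob M y > 0")
      case False
      then have "window_prob M y = 0" using window_prob_nonneg[of M y] by simp
      moreover have "real n * cell_mass y \<le> 0"
        using elim(2) \<open>window_prob M y = 0\<close> by (simp add: missed_density_def ennreal_eq_0_iff)
      ultimately show ?thesis using cell_mass_nonneg[of y] n_pos by (simp add: mult_le_0_iff)
    next
      case True
      obtain k where k: "k \<in> {1..n+1}" "y \<in> cell k"
        using cells_cover[OF window_prob_pos_imp_near_unit_interval[OF True] elim(3)] by blast
      have p: "cell_mass y > 0" using cell_mass_eq[OF k(2,1)] m_pos[OF k(1)] by simp
      have "real n * window_prob M y * gibbs_slack M y \<le> 0"
        using elim(1) by (simp add: ennreal_eq_0_iff)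
      then have "gibbs_slack M y = 0"
        using gibbs_slack_nonneg[of M y] n_pos True by (simp add: mult_le_0_iff)
      then have "ln (cell_mass y / window_prob M y) = cell_mass y / window_prob M y - 1"
        using True p by (simp add: gibbs_slack_def)
      then have "cell_mass y / window_prob M y = 1"
        using True p by (intro ln_eq_minus_one) auto
      then show ?thesis using True by simp
    qed
  qed
qed

end

text \<open>grid_point extends node below the first node: grid_point 0 = -1/n, whereas the
  truncated subtraction in node would give node 0 = node 1 = 0.\<close>

definition grid_point :: "nat \<Rightarrow> real" where "grid_point j = (real j - 1) / real n"

lemma grid_point_eq_node: "j \<ge> 1 \<Longrightarrow> grid_point j = node j"
  by (simp add: grid_point_def node_def of_nat_diff)

lemma grid_point_Suc: "grid_point (Suc j) = grid_point j + 2 * half_width"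
  using n_pos by (simp add: grid_point_def half_width_def field_simps)

text \<open>If the window probabilities are the step density almost everywhere, the distribution
  function is the partial sum of the masses on each open interval between consecutive nodes:
  each such value is squeezed between the previous one plus the mass seen by a window.\<close>

lemma measure_atMost_eq_partial_sum:
  assumes adm: "admissible_input M" and ae: "AE y in lborel. window_prob M y = cell_mass y"
  shows "j \<le> n + 1 \<Longrightarrow> grid_point j < s \<Longrightarrow> s < grid_point j + 2 * half_width
    \<Longrightarrow> measure M {..s} = (\<Sum>i\<in>{1..j}. m i)"
proof (induction j arbitrary: s)
  case 0
  then have "s < 0" using n_pos by (simp add: grid_point_def half_width_def)
  then show ?case using admissible_input_null_outside[OF adm, of "{..s}"] by (simp add: measure_def)
next
  case (Suc j)
  interpret prob_space M by (rule admissible_input_prob_space[OF adm])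
  note sets_M = sets_admissible_input[OF adm]
  have j: "Suc j \<in> {1..n+1}" using Suc.prems by auto
  have window_step: "measure M {..<y + half_width} = (\<Sum>i\<in>{1..j}. m i) + m (Suc j)"
    if y: "grid_point (Suc j) - half_width < y" "y < grid_point (Suc j) + half_width"
      "window_prob M y = cell_mass y" for y
  proof -
    have "y \<in> cell (Suc j)" using y grid_point_eq_node[of "Suc j"] by (simp add: cell_def)
    then have window: "measure M {y - half_width<..<y + half_width} = m (Suc j)"
      using y(3) cell_mass_eq[OF _ j] by (simp add: window_prob_def)
    have "measure M {..y - half_width} = (\<Sum>i\<in>{1..j}. m i)"
      using y grid_point_Suc[of j] Suc.prems by (intro Suc.IH) auto
    moreover have "{..y - half_width} \<union> {y - half_width<..<y + half_width} = {..<y + half_width}"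
      using half_width_pos by auto
    moreover have "measure M ({..y - half_width} \<union> {y - half_width<..<y + half_width})
        = measure M {..y - half_width} + measure M {y - half_width<..<y + half_width}"
      using sets_M by (intro finite_measure_Union) auto
    ultimately show ?thesis using window by simp
  qed
  obtain y1 where y1: "grid_point (Suc j) - half_width < y1" "y1 < s - half_width"
      "window_prob M y1 = cell_mass y1"
    using AE_lborel_obtain_between[OF ae, of "grid_point (Suc j) - half_width" "s - half_width"]
      Suc.prems by auto
  obtain y2 where y2: "s - half_width < y2" "y2 < grid_point (Suc j) + half_width"
      "window_prob M y2 = cell_mass y2"
    using AE_lborel_obtain_between[OF ae, of "s - half_width" "grid_point (Suc j) + half_width"]
      Suc.prems by auto
  have "y1 < grid_point (Suc j) + half_width" "grid_point (Suc j) - half_width < y2"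
    using y1(2) y2(1) Suc.prems(2,3) by linarith+
  then have "measure M {..<y1 + half_width} = (\<Sum>i\<in>{1..j}. m i) + m (Suc j)"
    "measure M {..<y2 + half_width} = (\<Sum>i\<in>{1..j}. m i) + m (Suc j)"
    using window_step[OF y1(1) _ y1(3)] window_step[OF _ y2(2) y2(3)] by simp_all
  moreover have "measure M {..<y1 + half_width} \<le> measure M {..s}"
    using sets_M y1(2) by (intro finite_measure_mono) auto
  moreover have "measure M {..s} \<le> measure M {..<y2 + half_width}"
    using sets_M y2(1) by (intro finite_measure_mono) auto
  ultimately show ?case by simp
qed

lemma cdf_eq_off_nodes:
  assumes "admissible_input M1" "AE y in lborel. window_prob M1 y = cell_mass y"
    and "admissible_input M2" "AE y in lborel. window_prob M2 y = cell_mass y"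
    and "s \<notin> node ` {1..n+1}"
  shows "cdf M1 s = cdf M2 s"
proof -
  consider "s < 0" | "s > 1" | "0 \<le> s" "s \<le> 1" by linarith
  then show ?thesis
  proof cases
    case 1
    then show ?thesis
      using admissible_input_null_outside[OF assms(1), of "{..s}"]
        admissible_input_null_outside[OF assms(3), of "{..s}"]
      by (simp add: cdf_def measure_def)
  next
    case 2
    then have "{s<..} \<inter> {0..1} = {}" by auto
    then have "measure M {..s} = 1" if "admissible_input M" for M :: "real measure"
    proof -
      interpret prob_space M by (rule admissible_input_prob_space[OF that])
      have "measure M (space M - {s<..}) = 1"
        using admissible_input_null_outside[OF that, of "{s<..}"] \<open>{s<..} \<inter> {0..1} = {}\<close>
          sets_admissible_input[OF that] by (subst prob_compl) (auto simp: measure_def)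
      moreover have "space M - {s<..} = {..s}"
        using sets_eq_imp_space_eq[OF sets_admissible_input[OF that]] by auto
      ultimately show ?thesis by simp
    qed
    then show ?thesis using assms(1,3) by (simp add: cdf_def)
  next
    case 3
    define j where "j = nat \<lfloor>real n * s\<rfloor> + 1"
    have floor: "of_int \<lfloor>real n * s\<rfloor> \<le> real n * s" "real n * s < of_int \<lfloor>real n * s\<rfloor> + 1"
      by linarith+
    have ns: "0 \<le> real n * s" "real n * s \<le> real n" using 3 n_pos by (auto simp: mult_le_cancel_left1)
    have jr: "real j - 1 = of_int \<lfloor>real n * s\<rfloor>" using ns by (simp add: j_def)
    have j: "j \<in> {1..n+1}" using ns floor by (simp add: j_def) linarith
    have "grid_point j \<le> s" using floor jr n_pos
      by (simp add: grid_point_def divide_le_eq mult.commute)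
    moreover have "grid_point j \<noteq> s" using assms(5) j grid_point_eq_node[of j] by auto
    moreover have "s < grid_point j + 2 * half_width" using floor jr n_pos
      by (simp add: grid_point_def half_width_def field_simps)
    ultimately show ?thesis
      using measure_atMost_eq_partial_sum[OF assms(1,2), of j s]
        measure_atMost_eq_partial_sum[OF assms(3,4), of j s] j
      by (simp add: cdf_def)
  qed
qed

lemma eq_if_window_prob_AE_eq_cell_mass:
  assumes "admissible_input M1" "AE y in lborel. window_prob M1 y = cell_mass y"
    and "admissible_input M2" "AE y in lborel. window_prob M2 y = cell_mass y"
  shows "M1 = M2"
  by (rule real_distribution_eqI_cdf_cofinite[OF assms(1,3)[THEN admissible_input_real_distribution],
      of "node ` {1..n+1}"])
    (auto intro: cdf_eq_off_nodes[OF assms])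

end

locale gibbs_grid =
  fixes n :: nat and \<alpha> lam :: real
  assumes n_gt_0: "n > 0" and \<alpha>_pos: "0 < \<alpha>" and \<alpha>_le_1: "\<alpha> \<le> 1" and lam_pos: "lam > 0"
begin

definition cost :: "nat \<Rightarrow> real" where "cost j = (real (j - 1) / real n) powr \<alpha>"
definition partition :: real where "partition = (\<Sum>j\<in>{1..n+1}. exp (- lam * cost j))"
definition gibbs_mass :: "nat \<Rightarrow> real" where "gibbs_mass j = exp (- lam * cost j) / partition"

lemma cost_nonneg: "cost j \<ge> 0"
  by (simp add: cost_def)

lemma partition_ge_1: "partition \<ge> 1"
proof -
  have "exp (- lam * cost 1) \<le> partition"
    unfolding partition_def by (rule member_le_sum) auto
  then show ?thesis by (simp add: cost_def)
qed

lemma gibbs_mass_pos: "gibbs_mass j > 0"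
  using partition_ge_1 by (simp add: gibbs_mass_def)

lemma sum_gibbs_mass: "(\<Sum>j\<in>{1..n+1}. gibbs_mass j) = 1"
  using partition_ge_1 by (simp add: gibbs_mass_def sum_divide_distrib[symmetric] partition_def)

sublocale grid_masses n gibbs_mass
  using n_gt_0 gibbs_mass_pos sum_gibbs_mass by unfold_locales auto

lemma ln_inverse_gibbs_mass: "ln (1 / gibbs_mass j) = lam * cost j + ln partition"
  using partition_ge_1 by (simp add: gibbs_mass_def ln_div)

lemma cost_eq_node_powr: "cost j = node j powr \<alpha>"
  by (simp add: cost_def node_def)

lemma interpolated_surprisal_le:
  assumes "0 \<le> x" "x \<le> 1"
  shows "(\<Sum>j\<in>{1..n+1}. ln (1 / gibbs_mass j) * hat n j x) \<le> lam * x powr \<alpha> + ln partition"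
proof -
  have "(\<Sum>j\<in>{1..n+1}. ln (1 / gibbs_mass j) * hat n j x)
      = lam * (\<Sum>j\<in>{1..n+1}. cost j * hat n j x) + ln partition * (\<Sum>j\<in>{1..n+1}. hat n j x)"
    by (simp add: ln_inverse_gibbs_mass algebra_simps sum.distrib sum_distrib_left)
  also have "(\<Sum>j\<in>{1..n+1}. hat n j x) = 1"
    by (rule sum_hat_eq_1[OF n_ge_1 assms])
  also have "(\<Sum>j\<in>{1..n+1}. cost j * hat n j x) \<le> x powr \<alpha>"
    unfolding cost_def by (rule sum_powr_hat_le[OF n_ge_1 assms \<alpha>_pos \<alpha>_le_1])
  finally show ?thesis using lam_pos by (simp add: mult_left_mono)
qed

lemma expected_surprisal_le:
  assumes adm: "admissible_input M" and cost: "cost_ok \<alpha> cbar M" and cbar: "cbar \<ge> 0"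
  shows "expected_surprisal M \<le> ennreal (lam * cbar + ln partition)"
proof -
  interpret prob_space M by (rule admissible_input_prob_space[OF adm])
  note sets_M = sets_admissible_input[OF adm]
  have "AE x in M. ennreal (\<Sum>j\<in>{1..n+1}. ln (1 / gibbs_mass j) * hat n j x)
      \<le> ennreal (lam * x powr \<alpha> + ln partition)"
    using admissible_input_AE_unit_interval[OF adm]
    by eventually_elim (rule ennreal_leI, rule interpolated_surprisal_le, auto)
  then have "expected_surprisal M \<le> (\<integral>\<^sup>+ x. ennreal (lam * x powr \<alpha> + ln partition) \<partial>M)"
    unfolding expected_surprisal_def by (rule nn_integral_mono_AE)
  also have "\<dots> = (\<integral>\<^sup>+ x. ennreal lam * ennreal (x powr \<alpha>) + ennreal (ln partition) \<partial>M)"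
    using lam_pos partition_ge_1 by (intro nn_integral_cong) (simp add: ennreal_plus ennreal_mult)
  also have "\<dots> = ennreal lam * (\<integral>\<^sup>+ x. ennreal (x powr \<alpha>) \<partial>M) + ennreal (ln partition)"
    using sets_M
    by (subst nn_integral_add)
      (auto simp: nn_integral_cmult emeasure_space_1 measurable_cong_sets[OF sets_M refl])
  also have "\<dots> \<le> ennreal lam * ennreal cbar + ennreal (ln partition)"
    using cost by (intro add_mono mult_left_mono) (auto simp: cost_ok_def)
  also have "\<dots> = ennreal (lam * cbar + ln partition)"
    using lam_pos cbar partition_ge_1 by (simp add: ennreal_plus ennreal_mult)
  finally show ?thesis .
qed

lemma mutual_info_add_slack_le:
  assumes "admissible_input M" "cost_ok \<alpha> cbar M" "cbar \<ge> 0"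
  shows "mutual_info half_width M + slack_integral M + missed_integral M
    \<le> ennreal (lam * cbar + ln partition)"
  using mutual_info_add_slack[OF assms(1)] expected_surprisal_le[OF assms] by simp

abbreviation gibbs_input :: "real measure" where
  "gibbs_input \<equiv> dirac_sum {1..n+1} node gibbs_mass"

lemma admissible_gibbs_input: "admissible_input gibbs_input"
proof -
  have "prob_space gibbs_input"
    by (rule prob_space_dirac_sum) (use gibbs_mass_pos sum_gibbs_mass in \<open>auto simp: less_imp_le\<close>)
  moreover have "(\<Sum>j\<in>{1..n+1}. gibbs_mass j * indicator {0..1} (node j)) = (\<Sum>j\<in>{1..n+1}. gibbs_mass j)"
    using n_pos by (intro sum.cong) (auto simp: indicator_def node_def divide_le_eq_1)
  then have "emeasure gibbs_input {0..1} = 1"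
    using sum_gibbs_mass gibbs_mass_pos by (subst emeasure_dirac_sum) (auto simp: less_imp_le)
  ultimately show ?thesis by (simp add: admissible_input_def)
qed

lemma nn_integral_cost_gibbs_input:
  "(\<integral>\<^sup>+ x. ennreal (x powr \<alpha>) \<partial>gibbs_input) = ennreal (\<Sum>j\<in>{1..n+1}. gibbs_mass j * cost j)"
proof -
  have "(\<integral>\<^sup>+ x. ennreal (x powr \<alpha>) \<partial>gibbs_input)
      = (\<Sum>j\<in>{1..n+1}. ennreal (gibbs_mass j) * ennreal (node j powr \<alpha>))"
    using gibbs_mass_pos by (subst nn_integral_dirac_sum) (auto simp: less_imp_le)
  also have "\<dots> = ennreal (\<Sum>j\<in>{1..n+1}. gibbs_mass j * cost j)"
    using gibbs_mass_pos cost_nonneg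
    by (subst sum_ennreal[symmetric]) (auto simp: ennreal_mult cost_eq_node_powr less_imp_le)
  finally show ?thesis .
qed

lemma window_prob_gibbs_input: "window_prob gibbs_input y = cell_mass y"
proof -
  have "emeasure gibbs_input {y - half_width<..<y + half_width}
      = ennreal (\<Sum>j\<in>{1..n+1}. gibbs_mass j * indicator {y - half_width<..<y + half_width} (node j))"
    using gibbs_mass_pos by (subst emeasure_dirac_sum) (auto simp: less_imp_le)
  also have "(\<Sum>j\<in>{1..n+1}. gibbs_mass j * indicator {y - half_width<..<y + half_width} (node j))
      = cell_mass y"
    unfolding cell_mass_def cell_def by (intro sum.cong) (auto simp: indicator_def)
  finally show ?thesis using cell_mass_nonneg by (simp add: window_prob_def measure_def)
qed

lemma mutual_info_gibbs_input:
  "mutual_info half_width gibbs_input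
    = ennreal (lam * (\<Sum>j\<in>{1..n+1}. gibbs_mass j * cost j) + ln partition)"
proof -
  have "slack_integral gibbs_input = 0" "missed_integral gibbs_input = 0"
    unfolding slack_integral_def gibbs_slack_def missed_integral_def missed_density_def
      window_prob_gibbs_input
    by (auto intro!: nn_integral_zero' AE_I2)
  then have "mutual_info half_width gibbs_input = expected_surprisal gibbs_input"
    using mutual_info_add_slack[OF admissible_gibbs_input] by simp
  also have "\<dots> = (\<Sum>k\<in>{1..n+1}. ennreal (gibbs_mass k)
      * ennreal (\<Sum>j\<in>{1..n+1}. ln (1 / gibbs_mass j) * hat n j (node k)))"
    unfolding expected_surprisal_def using gibbs_mass_pos
    by (subst nn_integral_dirac_sum) (auto simp: less_imp_le hat_def)
  also have "\<dots> = (\<Sum>k\<in>{1..n+1}. ennreal (gibbs_mass k * (lam * cost k + ln partition)))"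
  proof (intro sum.cong refl)
    fix k assume k: "k \<in> {1..n+1}"
    have "(\<Sum>j\<in>{1..n+1}. ln (1 / gibbs_mass j) * hat n j (node k))
        = (\<Sum>j\<in>{k}. ln (1 / gibbs_mass j) * hat n j (node k))"
      by (rule sum.mono_neutral_right) (use k in \<open>auto simp: hat_node\<close>)
    also have "\<dots> = lam * cost k + ln partition"
      using k by (simp add: hat_node ln_inverse_gibbs_mass)
    finally show "ennreal (gibbs_mass k) * ennreal (\<Sum>j\<in>{1..n+1}. ln (1 / gibbs_mass j) * hat n j (node k))
        = ennreal (gibbs_mass k * (lam * cost k + ln partition))"
      using gibbs_mass_pos[of k] lam_pos partition_ge_1 cost_nonneg[of k]
      by (simp add: ennreal_mult)
  qed
  also have "\<dots> = ennreal (\<Sum>k\<in>{1..n+1}. gibbs_mass k * (lam * cost k + ln partition))"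
    using gibbs_mass_pos lam_pos partition_ge_1 cost_nonneg
    by (intro sum_ennreal) (auto simp: less_imp_le)
  also have "(\<Sum>k\<in>{1..n+1}. gibbs_mass k * (lam * cost k + ln partition))
      = lam * (\<Sum>j\<in>{1..n+1}. gibbs_mass j * cost j) + ln partition"
    using sum_gibbs_mass
    by (simp add: algebra_simps sum.distrib sum_distrib_left[symmetric] sum_distrib_right[symmetric])
  finally show ?thesis .
qed

theorem capacity_achieving_iff_gibbs_input:
  assumes cbar: "(\<Sum>j\<in>{1..n+1}. gibbs_mass j * cost j) = cbar"
  shows "capacity_achieving half_width \<alpha> cbar M \<longleftrightarrow> M = gibbs_input"
proof -
  have cbar_nonneg: "cbar \<ge> 0"
    unfolding cbar[symmetric]
    by (intro sum_nonneg mult_nonneg_nonneg cost_nonneg less_imp_le[OF gibbs_mass_pos])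
  have gibbs_cost: "cost_ok \<alpha> cbar gibbs_input"
    unfolding cost_ok_def nn_integral_cost_gibbs_input cbar ..
  have gibbs_value: "mutual_info half_width gibbs_input = ennreal (lam * cbar + ln partition)"
    unfolding mutual_info_gibbs_input cbar ..
  have upper: "mutual_info half_width M' \<le> ennreal (lam * cbar + ln partition)"
    if "admissible_input M'" "cost_ok \<alpha> cbar M'" for M'
    using mutual_info_add_slack_le[OF that cbar_nonneg] by (metis add.assoc le_iff_add order_trans)
  show ?thesis
  proof
    assume "M = gibbs_input"
    then show "capacity_achieving half_width \<alpha> cbar M"
      unfolding capacity_achieving_def using admissible_gibbs_input gibbs_cost upper gibbs_value by auto
  next
    assume "capacity_achieving half_width \<alpha> cbar M"
    then have adm: "admissible_input M" and cost: "cost_ok \<alpha> cbar M"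
      and optimal: "ennreal (lam * cbar + ln partition) \<le> mutual_info half_width M"
      using admissible_gibbs_input gibbs_cost gibbs_value by (auto simp: capacity_achieving_def)
    have "mutual_info half_width M + (slack_integral M + missed_integral M)
        \<le> mutual_info half_width M + 0"
      using order_trans[OF mutual_info_add_slack_le[OF adm cost cbar_nonneg] optimal]
      by (simp add: add.assoc)
    moreover have "mutual_info half_width M \<noteq> \<infinity>"
      using upper[OF adm cost] by (auto simp: top_unique)
    ultimately have "slack_integral M + missed_integral M \<le> 0"
      by (simp add: ennreal_add_left_cancel_le)
    then have "slack_integral M = 0" "missed_integral M = 0" by auto
    then have "AE y in lborel. window_prob M y = cell_mass y"
      by (rule window_prob_AE_eq_cell_mass[OF adm])
    then show "M = gibbs_input"
      using eq_if_window_prob_AE_eq_cell_mass[OF adm _ admissible_gibbs_input]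
      unfolding window_prob_gibbs_input by simp
  qed
qed

end

lemma exists_gibbs_parameter:
  fixes c :: "'a \<Rightarrow> real"
  assumes J: "finite J" "j0 \<in> J" and c: "c j0 = 0" "\<And>j. j \<in> J \<Longrightarrow> c j \<ge> 0"
    and cbar: "0 < cbar" "cbar < (\<Sum>j\<in>J. c j) / real (card J)"
  shows "\<exists>lam>0. (\<Sum>j\<in>J. exp (- lam * c j) / (\<Sum>i\<in>J. exp (- lam * c i)) * c j) = cbar"
proof -
  define Z where "Z lam = (\<Sum>i\<in>J. exp (- lam * c i))" for lam
  define G where "G lam = (\<Sum>j\<in>J. exp (- lam * c j) / Z lam * c j)" for lam
  have Z_ge_1: "Z lam \<ge> 1" for lam
    unfolding Z_def using member_le_sum[OF J(2), of "\<lambda>i. exp (- lam * c i)"] J c(1) by simp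
  have G_0: "G 0 = (\<Sum>j\<in>J. c j) / real (card J)"
    by (simp add: G_def Z_def sum_divide_distrib)
  text \<open>Each summand of G L is at most c e^{-L c} \<le> 1/L, so a large L pushes G below cbar.\<close>
  define L where "L = 2 * real (card J) / cbar"
  have "card J > 0" using J by (auto simp: card_gt_0_iff)
  then have L: "L > 0" using cbar by (simp add: L_def)
  have "G L \<le> real (card J) * (1 / L)"
    unfolding G_def
  proof (rule sum_bounded_above)
    fix j assume j: "j \<in> J"
    have "exp (- L * c j) / Z L * c j \<le> exp (- L * c j) * c j"
      using Z_ge_1[of L] c(2)[OF j]
      by (intro mult_right_mono) (auto simp: divide_le_eq intro: mult_left_mono[of 1, simplified])
    also have "\<dots> \<le> 1 / L"
    proof -
      have "L * c j \<le> exp (L * c j)" using exp_ge_add_one_self[of "L * c j"] by linarith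
      then show ?thesis using L by (simp add: exp_minus field_simps)
    qed
    finally show "exp (- L * c j) / Z L * c j \<le> 1 / L" .
  qed
  also have "\<dots> = cbar / 2" using cbar \<open>card J > 0\<close> by (simp add: L_def)
  finally have G_L: "G L < cbar" using cbar by simp
  have "continuous_on {0..L} G"
    unfolding G_def Z_def using Z_ge_1[unfolded Z_def]
    by (intro continuous_intros) (metis not_one_le_zero)
  then obtain lam where lam: "0 \<le> lam" "lam \<le> L" "G lam = cbar"
    using IVT2'[of G L cbar 0] G_L G_0 cbar L by auto
  moreover have "lam \<noteq> 0" using lam G_0 cbar by auto
  ultimately show ?thesis by (intro exI[of _ lam]) (auto simp: G_def Z_def)
qed

lemma std_n_of_unif_r_Nats:
  assumes "b > 0" "unif_r b \<in> \<nat>"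
  shows "std_n b \<ge> 1" "b = 1 / (2 * real (std_n b))"
proof -
  obtain k :: nat where k: "unif_r b = real k" using assms(2) by (auto elim: Nats_cases)
  then have "std_n b = k" by (simp add: std_n_def)
  moreover have "real k * (2 * b) = 1" using k assms(1) by (simp add: unif_r_def field_simps)
  moreover from this have "k \<noteq> 0" by (metis mult_zero_left of_nat_0 zero_neq_one)
  ultimately show "std_n b \<ge> 1" "b = 1 / (2 * real (std_n b))"
    by (simp_all add: field_simps)
qed

theorem mainTheorem1:
  fixes b \<alpha> cbar :: real
  assumes "b > 0" and "unif_r b \<in> \<nat>"
    and "0 < \<alpha>" and "\<alpha> \<le> 1"
    and "0 < cbar" and "cbar < crit_cost_nat b \<alpha>"
  shows "\<exists>lam>0.
    (let n = std_n b;
         x = (\<lambda>j::nat. real (j - 1) / real n);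
         c = (\<lambda>j. x j powr \<alpha>);
         z = (\<Sum>j\<in>{1..n+1}. exp (- lam * c j));
         m = (\<lambda>j. exp (- lam * c j) / z)
     in (\<Sum>j\<in>{1..n+1}. m j * c j) = cbar \<and>
        (\<forall>M. capacity_achieving b \<alpha> cbar M \<longleftrightarrow> M = point_masses {1..n+1} x m))"
proof -
  define n where "n = std_n b"
  define c where "c j = (real (j - 1) / real n) powr \<alpha>" for j
  have n: "n \<ge> 1" and b: "b = 1 / (2 * real n)"
    using std_n_of_unif_r_Nats[OF assms(1,2)] by (simp_all add: n_def)
  have "crit_cost_nat b \<alpha> = (\<Sum>j\<in>{1..n+1}. c j) / real (card {1..n+1})"
    unfolding crit_cost_nat_def Let_def n_def[symmetric] c_def[symmetric]
    by (subst sum_distrib_left[symmetric]) simp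
  then obtain lam where lam: "lam > 0"
    and cost: "(\<Sum>j\<in>{1..n+1}. exp (- lam * c j) / (\<Sum>i\<in>{1..n+1}. exp (- lam * c i)) * c j) = cbar"
    using exists_gibbs_parameter[of "{1..n+1}" 1 c cbar] assms(5,6) by (auto simp: c_def)
  interpret gibbs_grid n \<alpha> lam
    using n assms(3,4) lam by unfold_locales auto
  have node: "real (j - 1) / real n = node j" for j
    by (simp add: node_def)
  have mass: "exp (- lam * c j) / (\<Sum>i\<in>{1..n+1}. exp (- lam * c i)) = gibbs_mass j" for j
    by (simp add: c_def cost_def gibbs_mass_def partition_def)
  have "(\<Sum>j\<in>{1..n+1}. gibbs_mass j * cost j) = cbar"
    using cost unfolding mass by (simp add: c_def cost_def)
  then have capacity_iff: "capacity_achieving b \<alpha> cbar M \<longleftrightarrow> M = point_masses {1..n+1} node gibbs_mass"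
    for M
    unfolding point_masses_eq_dirac_sum[OF finite_atLeastAtMost less_imp_le[OF gibbs_mass_pos]]
      b half_width_def[symmetric]
    by (rule capacity_achieving_iff_gibbs_input)
  show ?thesis
    unfolding Let_def n_def[symmetric] c_def[symmetric]
    by (intro exI[of _ lam] conjI allI lam cost, unfold node mass) (rule capacity_iff)
qed

end
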